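(* Under the standing assumptions of the setup, suppose additionally that for some $\delta\ge 0$ and all $(v,w)$, \[ \big|\mathbb{E}(Y^1-Y^0\mid V=v,W=w,E=1)-\mathbb{E}(Y^1-Y^0\mid V=v,E=1)\big|\le\delta . \] Let $\theta(v)=\mu_1(v)-\mu_0(v)$. Then for every $(v,w)$ with $\nu(v,w)>0$, \[ \max\left\{\frac{\theta(v)-(\theta(v)+\delta)(1-\nu(v,w))}{\nu(v,w)},\,\theta(v)-\delta\right\}\le \mathbb{E}(Y^1-Y^0\mid V=v,W=w,E=1)\le \min\left\{\frac{\theta(v)-(\theta(v)-\delta)(1-\nu(v,w))}{\nu(v,w)},\,\theta(v)+\delta\right\}. \]
   Context: Setup: there are random variables $V$, $W$ (taking finitely many values), a population indicator $E\in\{0,1\}$ ($E=1$: study, $E=0$: target), treatment $A\in\{0,1\}$, potential outcomes $Y^1,Y^0\in[a,b]$ a.s., and $Y=Y^A$. Assume $A\perp\!\!\!\perp (Y^0,Y^1)\mid V,E=1$; positivity $\mathbb{P}(A=a'\mid V,W)>0$; (1) $\mathbb{P}(W=w\mid V=v,E=1)=\mathbb{P}(W=w\mid V=v,E=0)$; (2) $\mathbb{E}(Y^1-Y^0\mid V,W,E=1)=\mathbb{E}(Y^1-Y^0\mid V,W,E=0)$. Notation: $\mu_{a'}(v)=\mathbb{E}(Y\mid V=v,A=a',E=1)$, $\nu(v,w)=\mathbb{P}(W=w\mid V=v,E=0)$. (The bounds are those of the worst-case identification result with the extreme values $b-a$ and $a-b$ of $Y^1-Y^0$ replaced by $\theta(v)+\delta$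 and $\theta(v)-\delta$.) *)

theory Defs
  imports "HOL-Probability.Probability"
begin

text \<open>Elementary conditioning on an event C of positive probability
  (division convention x / 0 = 0 otherwise).\<close>

definition ev :: "'a measure \<Rightarrow> ('a \<Rightarrow> bool) \<Rightarrow> 'a set" where
  "ev M P = {\<omega> \<in> space M. P \<omega>}"

definition cprob :: "'a measure \<Rightarrow> ('a \<Rightarrow> bool) \<Rightarrow> ('a \<Rightarrow> bool) \<Rightarrow> real" where
  "cprob M P C = measure M (ev M (\<lambda>\<omega>. P \<omega> \<and> C \<omega>)) / measure M (ev M C)"

definition cexp :: "'a measure \<Rightarrow> ('a \<Rightarrow> real) \<Rightarrow> ('a \<Rightarrow> bool) \<Rightarrow> real" where
  "cexp M X C = (\<integral>\<omega>. indicator (ev M C) \<omega> * X \<omega> \<partial>M) / measure M (ev M C)"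

definition mu :: "'a measure \<Rightarrow> ('a \<Rightarrow> 'v) \<Rightarrow> ('a \<Rightarrow> bool) \<Rightarrow> ('a \<Rightarrow> bool) \<Rightarrow> ('a \<Rightarrow> real)
    \<Rightarrow> bool \<Rightarrow> 'v \<Rightarrow> real" where
  "mu M V A E Y a' v = cexp M Y (\<lambda>\<omega>. V \<omega> = v \<and> A \<omega> = a' \<and> E \<omega>)"

definition nu :: "'a measure \<Rightarrow> ('a \<Rightarrow> 'v) \<Rightarrow> ('a \<Rightarrow> 'w) \<Rightarrow> ('a \<Rightarrow> bool) \<Rightarrow> 'v \<Rightarrow> 'w \<Rightarrow> real" where
  "nu M V W E v w = cprob M (\<lambda>\<omega>. W \<omega> = w) (\<lambda>\<omega>. V \<omega> = v \<and> \<not> E \<omega>)"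

end

theory Submission
  imports Defs
begin

text \<open>Ignorability identifies \<mu>_a(v) with E(Y^a | V = v, E = 1), so \<theta>(v) is the study
  effect at V = v, and transportability of W turns \<nu>(v,w) into the study share of the stratum
  W = w. By the law of total expectation \<theta>(v) is then the share-weighted mean of the stratum
  effects, each of which lies within \<delta> of \<theta>(v); moving all other strata to \<theta>(v) \<plusminus> \<delta>
  gives the extreme values of the effect in stratum w.\<close>

lemma emeasure_distr_density_indicator:
  assumes [measurable]: "g \<in> M \<rightarrow>\<^sub>M N" "D \<in> sets M" "S \<in> sets N"
  shows "emeasure (distr (density M (\<lambda>\<omega>. ennreal (c * indicator D \<omega>))) N g) S
      = ennreal c * emeasure M (g -` S \<inter> space M \<inter> D)"
proof -
  have "g \<in> density M (\<lambda>\<omega>. ennreal (c * indicator D \<omega>)) \<rightarrow>\<^sub>M N"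
    by (simp add: measurable_cong_sets[OF sets_density refl])
  then have "emeasure (distr (density M (\<lambda>\<omega>. ennreal (c * indicator D \<omega>))) N g) S
      = (\<integral>\<^sup>+ \<omega>. ennreal (c * indicator D \<omega>) * indicator (g -` S \<inter> space M) \<omega> \<partial>M)"
    by (simp add: emeasure_distr emeasure_density)
  also have "\<dots> = (\<integral>\<^sup>+ \<omega>. ennreal c * indicator (g -` S \<inter> space M \<inter> D) \<omega> \<partial>M)"
    by (intro nn_integral_cong) (auto split: split_indicator)
  finally show ?thesis
    by (simp add: nn_integral_cmult_indicator)
qed

lemma integral_distr_density_indicator:
  fixes h :: "'b \<Rightarrow> real"
  assumes [measurable]: "g \<in> M \<rightarrow>\<^sub>M N" "D \<in> sets M" "h \<in> borel_measurable N" and "c \<ge> 0"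
  shows "integral\<^sup>L (distr (density M (\<lambda>\<omega>. ennreal (c * indicator D \<omega>))) N g) h
      = c * (\<integral>\<omega>. indicator D \<omega> * h (g \<omega>) \<partial>M)"
proof -
  have "g \<in> density M (\<lambda>\<omega>. ennreal (c * indicator D \<omega>)) \<rightarrow>\<^sub>M N"
    by (simp add: measurable_cong_sets[OF sets_density refl])
  then have "integral\<^sup>L (distr (density M (\<lambda>\<omega>. ennreal (c * indicator D \<omega>))) N g) h
      = integral\<^sup>L (density M (\<lambda>\<omega>. ennreal (c * indicator D \<omega>))) (\<lambda>\<omega>. h (g \<omega>))"
    by (simp add: integral_distr)
  also have "\<dots> = (\<integral>\<omega>. c * (indicator D \<omega> * h (g \<omega>)) \<partial>M)"
    using \<open>c \<ge> 0\<close> by (subst integral_density) (auto simp: mult.assoc)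
  finally show ?thesis by simp
qed

text \<open>The hypothesis says that the pushforwards under g of M restricted to B and to C,
  rescaled by the measures of C and B respectively, coincide.\<close>

lemma integral_indicator_comp_cross_eq:
  fixes g :: "'a \<Rightarrow> 'b" and h :: "'b \<Rightarrow> real"
  assumes "finite_measure M"
    and [measurable]: "g \<in> M \<rightarrow>\<^sub>M N" "B \<in> sets M" "C \<in> sets M" "h \<in> borel_measurable N"
    and cross: "\<And>S. S \<in> sets N \<Longrightarrow>
      measure M (g -` S \<inter> space M \<inter> B) * measure M C = measure M B * measure M (g -` S \<inter> space M \<inter> C)"
  shows "measure M C * (\<integral>\<omega>. indicator B \<omega> * h (g \<omega>) \<partial>M)
       = measure M B * (\<integral>\<omega>. indicator C \<omega> * h (g \<omega>) \<partial>M)"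
proof -
  interpret finite_measure M by fact
  let ?law = "\<lambda>c D. distr (density M (\<lambda>\<omega>. ennreal (c * indicator D \<omega>))) N g"
  have "?law (measure M C) B = ?law (measure M B) C"
  proof (rule measure_eqI)
    fix S assume "S \<in> sets (?law (measure M C) B)"
    then have S: "S \<in> sets N" by simp
    have "emeasure (?law (measure M C) B) S
        = ennreal (measure M C * measure M (g -` S \<inter> space M \<inter> B))"
      unfolding emeasure_distr_density_indicator[OF assms(2,3) S]
      by (simp add: emeasure_eq_measure ennreal_mult)
    also have "\<dots> = ennreal (measure M B * measure M (g -` S \<inter> space M \<inter> C))"
      using cross[OF S] by (simp only: mult.commute)
    also have "\<dots> = emeasure (?law (measure M B) C) S"
      unfolding emeasure_distr_density_indicator[OF assms(2,4) S]
      by (simp add: emeasure_eq_measure ennreal_mult)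
    finally show "emeasure (?law (measure M C) B) S = emeasure (?law (measure M B) C) S" .
  qed simp
  then show ?thesis
    using integral_distr_density_indicator[OF assms(2,3,5) measure_nonneg]
      integral_distr_density_indicator[OF assms(2,4,5) measure_nonneg]
    by metis
qed

lemma sets_ev: "Measurable.pred M P \<Longrightarrow> ev M P \<in> sets M"
  unfolding ev_def by measurable

lemma ev_Int_space: "ev M P \<inter> space M = ev M P"
  unfolding ev_def by auto

lemma integrable_indicator_ev_mult:
  fixes f :: "'a \<Rightarrow> real"
  assumes "Measurable.pred M P" "integrable M f"
  shows "integrable M (\<lambda>\<omega>. indicator (ev M P) \<omega> * f \<omega>)"
  using integrable_real_mult_indicator[OF sets_ev[OF assms(1)] assms(2)] by (simp add: mult.commute)

lemma cexp_cong:
  assumes "\<And>\<omega>. \<omega> \<in> space M \<Longrightarrow> P \<omega> \<Longrightarrow> X \<omega> = Z \<omega>"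
  shows "cexp M X P = cexp M Z P"
  unfolding cexp_def
  by (intro arg_cong2[where f = "(/)"] Bochner_Integration.integral_cong refl)
     (auto simp: ev_def assms split: split_indicator)

lemma cexp_diff:
  fixes X Z :: "'a \<Rightarrow> real"
  assumes "integrable M X" "integrable M Z" "Measurable.pred M P"
  shows "cexp M (\<lambda>\<omega>. X \<omega> - Z \<omega>) P = cexp M X P - cexp M Z P"
  unfolding cexp_def using assms integrable_indicator_ev_mult[OF assms(3)]
  by (simp add: right_diff_distrib Bochner_Integration.integral_diff diff_divide_distrib)

lemma integral_indicator_ev_eq_sum_strata:
  fixes f :: "'a \<Rightarrow> real" and W :: "'a \<Rightarrow> 'w"
  assumes "finite (W ` space M)" "integrable M f" "Measurable.pred M P"
    and [measurable]: "W \<in> M \<rightarrow>\<^sub>M count_space UNIV"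
  shows "(\<integral>\<omega>. indicator (ev M P) \<omega> * f \<omega> \<partial>M)
       = (\<Sum>w\<in>W ` space M. \<integral>\<omega>. indicator (ev M (\<lambda>\<omega>. P \<omega> \<and> W \<omega> = w)) \<omega> * f \<omega> \<partial>M)"
proof -
  have "(\<integral>\<omega>. indicator (ev M P) \<omega> * f \<omega> \<partial>M)
      = (\<integral>\<omega>. (\<Sum>w\<in>W ` space M. indicator (ev M (\<lambda>\<omega>. P \<omega> \<and> W \<omega> = w)) \<omega> * f \<omega>) \<partial>M)"
  proof (rule Bochner_Integration.integral_cong[OF refl])
    fix \<omega> assume \<omega>: "\<omega> \<in> space M"
    have "(\<Sum>w\<in>W ` space M. indicator (ev M (\<lambda>\<omega>. P \<omega> \<and> W \<omega> = w)) \<omega> * f \<omega>)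
        = (\<Sum>w\<in>W ` space M. if w = W \<omega> then indicator (ev M P) \<omega> * f \<omega> else 0)"
      by (intro sum.cong refl) (auto simp: ev_def \<omega> split: split_indicator)
    also have "\<dots> = indicator (ev M P) \<omega> * f \<omega>"
      using \<omega> assms(1) by (simp only: sum.delta) simp
    finally show "indicator (ev M P) \<omega> * f \<omega>
        = (\<Sum>w\<in>W ` space M. indicator (ev M (\<lambda>\<omega>. P \<omega> \<and> W \<omega> = w)) \<omega> * f \<omega>)" ..
  qed
  also have "\<dots> = (\<Sum>w\<in>W ` space M. \<integral>\<omega>. indicator (ev M (\<lambda>\<omega>. P \<omega> \<and> W \<omega> = w)) \<omega> * f \<omega> \<partial>M)"
    by (intro Bochner_Integration.integral_sum integrable_indicator_ev_mult assms(2))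
      (use assms(3) in measurable)
  finally show ?thesis .
qed

lemma integral_indicator_ev_bounds:
  fixes X :: "'a \<Rightarrow> real"
  assumes "finite_measure M" "integrable M X" "Measurable.pred M P"
    and bound: "measure M (ev M P) > 0 \<Longrightarrow> \<bar>cexp M X P - \<theta>\<bar> \<le> \<delta>"
  shows "measure M (ev M P) * (\<theta> - \<delta>) \<le> (\<integral>\<omega>. indicator (ev M P) \<omega> * X \<omega> \<partial>M)
       \<and> (\<integral>\<omega>. indicator (ev M P) \<omega> * X \<omega> \<partial>M) \<le> measure M (ev M P) * (\<theta> + \<delta>)"
proof (cases "measure M (ev M P) > 0")
  case True
  let ?I = "\<integral>\<omega>. indicator (ev M P) \<omega> * X \<omega> \<partial>M"
  have "\<theta> - \<delta> \<le> ?I / measure M (ev M P)" "?I / measure M (ev M P) \<le> \<theta> + \<delta>"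
    using bound[OF True] unfolding cexp_def by auto
  then show ?thesis
    using True by (simp add: pos_le_divide_eq pos_divide_le_eq mult.commute[of "measure M (ev M P)"])
next
  case False
  interpret finite_measure M by fact
  have "ev M P \<in> null_sets M"
    using False sets_ev[OF assms(3)] measure_nonneg[of M "ev M P"]
    by (auto simp: emeasure_eq_measure null_sets_def not_less)
  then have "(\<integral>\<omega>. indicator (ev M P) \<omega> * X \<omega> \<partial>M) = 0"
    by (intro integral_eq_zero_AE) (auto dest!: AE_not_in elim!: eventually_mono)
  then show ?thesis using False measure_nonneg[of M "ev M P"] by simp
qed

lemma mu_eq_cexp_potential_outcome:
  fixes V :: "'a \<Rightarrow> 'v" and E A :: "'a \<Rightarrow> bool" and Y1 Y0 Y :: "'a \<Rightarrow> real"
  assumes "finite_measure M"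
    and [measurable]: "V \<in> M \<rightarrow>\<^sub>M count_space UNIV" "E \<in> M \<rightarrow>\<^sub>M count_space UNIV"
      "A \<in> M \<rightarrow>\<^sub>M count_space UNIV" "Y1 \<in> borel_measurable M" "Y0 \<in> borel_measurable M"
    and Y_def: "\<And>\<omega>. Y \<omega> = (if A \<omega> then Y1 \<omega> else Y0 \<omega>)"
    and ignorability: "\<And>S. S \<in> sets (borel \<Otimes>\<^sub>M borel) \<Longrightarrow>
        measure M (ev M (\<lambda>\<omega>. A \<omega> = a' \<and> (Y0 \<omega>, Y1 \<omega>) \<in> S \<and> V \<omega> = v \<and> E \<omega>))
          * measure M (ev M (\<lambda>\<omega>. V \<omega> = v \<and> E \<omega>))
        = measure M (ev M (\<lambda>\<omega>. A \<omega> = a' \<and> V \<omega> = v \<and> E \<omega>))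
          * measure M (ev M (\<lambda>\<omega>. (Y0 \<omega>, Y1 \<omega>) \<in> S \<and> V \<omega> = v \<and> E \<omega>))"
    and pos: "measure M (ev M (\<lambda>\<omega>. V \<omega> = v \<and> A \<omega> = a' \<and> E \<omega>)) > 0"
  shows "mu M V A E Y a' v = cexp M (if a' then Y1 else Y0) (\<lambda>\<omega>. V \<omega> = v \<and> E \<omega>)"
proof -
  interpret finite_measure M by fact
  define g where "g \<omega> = (Y0 \<omega>, Y1 \<omega>)" for \<omega>
  define h :: "real \<times> real \<Rightarrow> real" where "h = (if a' then snd else fst)"
  define B where "B = ev M (\<lambda>\<omega>. V \<omega> = v \<and> A \<omega> = a' \<and> E \<omega>)"
  define C where "C = ev M (\<lambda>\<omega>. V \<omega> = v \<and> E \<omega>)"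
  have g_meas: "g \<in> M \<rightarrow>\<^sub>M borel \<Otimes>\<^sub>M borel"
    unfolding g_def by measurable
  have h_meas: "h \<in> borel_measurable (borel \<Otimes>\<^sub>M borel)"
    unfolding h_def by (cases a') simp_all
  have B_sets: "B \<in> sets M" and C_sets: "C \<in> sets M"
    unfolding B_def C_def by (intro sets_ev; measurable)+
  have "measure M B \<le> measure M C"
    using C_sets unfolding B_def C_def by (intro finite_measure_mono) (auto simp: ev_def)
  then have pos_C: "measure M C > 0"
    using pos unfolding B_def by linarith
  have "measure M C * (\<integral>\<omega>. indicator B \<omega> * h (g \<omega>) \<partial>M)
      = measure M B * (\<integral>\<omega>. indicator C \<omega> * h (g \<omega>) \<partial>M)"
  proof (rule integral_indicator_comp_cross_eq[OF \<open>finite_measure M\<close> g_meas B_sets C_sets h_meas])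
    fix S :: "(real \<times> real) set" assume S: "S \<in> sets (borel \<Otimes>\<^sub>M borel)"
    have "ev M (\<lambda>\<omega>. A \<omega> = a' \<and> (Y0 \<omega>, Y1 \<omega>) \<in> S \<and> V \<omega> = v \<and> E \<omega>) = g -` S \<inter> space M \<inter> B"
      "ev M (\<lambda>\<omega>. A \<omega> = a' \<and> V \<omega> = v \<and> E \<omega>) = B"
      "ev M (\<lambda>\<omega>. (Y0 \<omega>, Y1 \<omega>) \<in> S \<and> V \<omega> = v \<and> E \<omega>) = g -` S \<inter> space M \<inter> C"
      unfolding g_def B_def C_def ev_def by auto
    then show "measure M (g -` S \<inter> space M \<inter> B) * measure M C
        = measure M B * measure M (g -` S \<inter> space M \<inter> C)"
      using ignorability[OF S] unfolding C_def by simp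
  qed
  then have "cexp M (\<lambda>\<omega>. h (g \<omega>)) (\<lambda>\<omega>. V \<omega> = v \<and> A \<omega> = a' \<and> E \<omega>)
      = cexp M (\<lambda>\<omega>. h (g \<omega>)) (\<lambda>\<omega>. V \<omega> = v \<and> E \<omega>)"
    using pos pos_C unfolding cexp_def B_def[symmetric] C_def[symmetric]
    by (simp add: frac_eq_eq mult.commute)
  moreover have "mu M V A E Y a' v = cexp M (\<lambda>\<omega>. h (g \<omega>)) (\<lambda>\<omega>. V \<omega> = v \<and> A \<omega> = a' \<and> E \<omega>)"
    unfolding mu_def by (rule cexp_cong) (simp add: Y_def g_def h_def)
  moreover have "cexp M (\<lambda>\<omega>. h (g \<omega>)) (\<lambda>\<omega>. V \<omega> = v \<and> E \<omega>)
      = cexp M (if a' then Y1 else Y0) (\<lambda>\<omega>. V \<omega> = v \<and> E \<omega>)"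
    by (rule cexp_cong) (simp add: g_def h_def)
  ultimately show ?thesis by simp
qed

text \<open>The worst case: every stratum other than k has conditional mean at the end of
  [\<theta> - \<delta>, \<theta> + \<delta>] that pushes the mean of stratum k furthest.\<close>

lemma weighted_mean_component_bounds:
  fixes p I :: "'k \<Rightarrow> real"
  assumes "finite K" "k \<in> K" "p k > 0" "\<And>j. j \<in> K \<Longrightarrow> p j \<ge> 0"
    and bounds: "\<And>j. j \<in> K \<Longrightarrow> p j * (\<theta> - \<delta>) \<le> I j \<and> I j \<le> p j * (\<theta> + \<delta>)"
    and mean: "\<theta> * sum p K = sum I K"
    and \<nu>_def: "\<nu> = p k / sum p K"
  shows "max ((\<theta> - (\<theta> + \<delta>) * (1 - \<nu>)) / \<nu>) (\<theta> - \<delta>) \<le> I k / p k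
       \<and> I k / p k \<le> min ((\<theta> - (\<theta> - \<delta>) * (1 - \<nu>)) / \<nu>) (\<theta> + \<delta>)"
proof -
  define Q where "Q = sum p (K - {k})"
  define R where "R = sum I (K - {k})"
  have total_p: "sum p K = p k + Q" and total_I: "sum I K = I k + R"
    unfolding Q_def R_def using assms(1,2) by (simp_all add: sum.remove)
  have "Q \<ge> 0"
    unfolding Q_def using assms(4) by (intro sum_nonneg) auto
  have "Q * (\<theta> - \<delta>) \<le> R" "R \<le> Q * (\<theta> + \<delta>)"
    unfolding Q_def R_def sum_distrib_right using bounds by (auto intro: sum_mono)
  have "p k + Q > 0"
    using \<open>p k > 0\<close> \<open>Q \<ge> 0\<close> by linarith
  then have "1 - \<nu> = Q / (p k + Q)"
    unfolding \<nu>_def total_p by (simp add: field_simps)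
  then have "(\<theta> - c * (1 - \<nu>)) / \<nu> = (\<theta> * sum p K - c * Q) / p k" for c
    using \<open>p k + Q > 0\<close> unfolding \<nu>_def total_p
    by (simp add: divide_divide_eq_right left_diff_distrib)
  moreover have "(\<theta> * sum p K - (\<theta> + \<delta>) * Q) / p k \<le> I k / p k"
    "I k / p k \<le> (\<theta> * sum p K - (\<theta> - \<delta>) * Q) / p k"
    using \<open>p k > 0\<close> mean total_I \<open>Q * (\<theta> - \<delta>) \<le> R\<close> \<open>R \<le> Q * (\<theta> + \<delta>)\<close>
    by (simp_all add: divide_right_mono algebra_simps)
  moreover have "\<theta> - \<delta> \<le> I k / p k" "I k / p k \<le> \<theta> + \<delta>"
    using bounds[OF assms(2)] \<open>p k > 0\<close> by (simp_all add: pos_le_divide_eq pos_divide_le_eq mult.commute)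
  ultimately show ?thesis by simp
qed

lemma cexp_stratum_bounds:
  fixes X :: "'a \<Rightarrow> real" and W :: "'a \<Rightarrow> 'w"
  assumes "finite_measure M" "integrable M X" and [measurable]: "Measurable.pred M P"
    and [measurable]: "W \<in> M \<rightarrow>\<^sub>M count_space UNIV" and W_fin: "finite (W ` space M)"
    and stratum: "\<And>w' \<omega>. \<omega> \<in> space M \<Longrightarrow> S w' \<omega> \<longleftrightarrow> P \<omega> \<and> W \<omega> = w'"
    and pos: "measure M (ev M (S w)) > 0"
    and close: "\<And>w'. measure M (ev M (S w')) > 0 \<Longrightarrow> \<bar>cexp M X (S w') - cexp M X P\<bar> \<le> \<delta>"
  shows "let \<theta> = cexp M X P; \<nu> = measure M (ev M (S w)) / measure M (ev M P); \<tau> = cexp M X (S w)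
         in max ((\<theta> - (\<theta> + \<delta>) * (1 - \<nu>)) / \<nu>) (\<theta> - \<delta>) \<le> \<tau>
          \<and> \<tau> \<le> min ((\<theta> - (\<theta> - \<delta>) * (1 - \<nu>)) / \<nu>) (\<theta> + \<delta>)"
proof -
  interpret finite_measure M by fact
  define p where "p w' = measure M (ev M (S w'))" for w'
  define I where "I w' = (\<integral>\<omega>. indicator (ev M (S w')) \<omega> * X \<omega> \<partial>M)" for w'
  have p_nonneg: "p w' \<ge> 0" for w'
    unfolding p_def by (rule measure_nonneg)
  have strata: "ev M (\<lambda>\<omega>. P \<omega> \<and> W \<omega> = w') = ev M (S w')" for w'
    by (auto simp: ev_def stratum)
  have pred_S: "Measurable.pred M (S w')" for w'
    by (subst measurable_cong[OF stratum]) measurable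
  have "p w \<le> measure M (ev M P)"
    unfolding p_def by (intro finite_measure_mono sets_ev assms(3)) (auto simp: ev_def stratum)
  then have pos_P: "measure M (ev M P) > 0"
    using pos unfolding p_def by linarith
  have total_p: "measure M (ev M P) = sum p (W ` space M)"
    using integral_indicator_ev_eq_sum_strata[OF W_fin _ assms(3), of "\<lambda>_. 1"]
    unfolding p_def strata by (simp add: sets_ev assms(3) ev_Int_space)
  have total_I: "cexp M X P * sum p (W ` space M) = sum I (W ` space M)"
    using integral_indicator_ev_eq_sum_strata[OF W_fin assms(2,3)] pos_P
    unfolding I_def strata cexp_def total_p[symmetric] by simp
  have bounds: "p w' * (cexp M X P - \<delta>) \<le> I w' \<and> I w' \<le> p w' * (cexp M X P + \<delta>)" for w'
    unfolding p_def I_def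
    by (rule integral_indicator_ev_bounds[OF assms(1,2) pred_S close])
  have "ev M (S w) \<noteq> {}"
    using pos by auto
  then have "w \<in> W ` space M"
    unfolding ev_def using stratum by auto
  have \<tau>: "cexp M X (S w) = I w / p w"
    unfolding cexp_def I_def p_def ..
  show ?thesis
    using weighted_mean_component_bounds[OF W_fin \<open>w \<in> W ` space M\<close> pos[folded p_def] p_nonneg bounds
        total_I refl]
    unfolding Let_def \<tau> total_p p_def[symmetric] .
qed

lemma nu_eq_study_ratio:
  assumes transport: "measure M (ev M (\<lambda>\<omega>. V \<omega> = v \<and> \<not> E \<omega>)) > 0 \<Longrightarrow>
        cprob M (\<lambda>\<omega>. W \<omega> = w) (\<lambda>\<omega>. V \<omega> = v \<and> E \<omega>)
        = cprob M (\<lambda>\<omega>. W \<omega> = w) (\<lambda>\<omega>. V \<omega> = v \<and> \<not> E \<omega>)"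
    and nu_pos: "nu M V W E v w > 0"
  shows "nu M V W E v w
       = measure M (ev M (\<lambda>\<omega>. V \<omega> = v \<and> W \<omega> = w \<and> E \<omega>)) / measure M (ev M (\<lambda>\<omega>. V \<omega> = v \<and> E \<omega>))"
proof -
  have ev_reorder: "ev M (\<lambda>\<omega>. W \<omega> = w \<and> V \<omega> = v \<and> E \<omega>) = ev M (\<lambda>\<omega>. V \<omega> = v \<and> W \<omega> = w \<and> E \<omega>)"
    by (auto simp: ev_def)
  have "measure M (ev M (\<lambda>\<omega>. V \<omega> = v \<and> \<not> E \<omega>)) \<noteq> 0"
    using nu_pos unfolding nu_def cprob_def by auto
  then have "nu M V W E v w = cprob M (\<lambda>\<omega>. W \<omega> = w) (\<lambda>\<omega>. V \<omega> = v \<and> E \<omega>)"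
    unfolding nu_def using transport measure_nonneg[of M] by (simp add: less_le)
  also have "\<dots> = measure M (ev M (\<lambda>\<omega>. V \<omega> = v \<and> W \<omega> = w \<and> E \<omega>))
      / measure M (ev M (\<lambda>\<omega>. V \<omega> = v \<and> E \<omega>))"
    by (simp only: cprob_def ev_reorder)
  finally show ?thesis .
qed

lemma integrable_AE_bounded:
  fixes X :: "'a \<Rightarrow> real"
  assumes "finite_measure M" "X \<in> borel_measurable M" "AE \<omega> in M. a \<le> X \<omega> \<and> X \<omega> \<le> b"
  shows "integrable M X"
proof -
  interpret finite_measure M by fact
  show ?thesis
    by (rule integrable_const_bound[where B = "\<bar>a\<bar> + \<bar>b\<bar>", OF _ assms(2)])
      (use assms(3) in \<open>eventually_elim, auto\<close>)
qed

theorem mainTheorem3: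
  fixes M :: "'a measure" and V :: "'a \<Rightarrow> 'v" and W :: "'a \<Rightarrow> 'w"
    and E A :: "'a \<Rightarrow> bool" and Y1 Y0 Y :: "'a \<Rightarrow> real" and a b \<delta> :: real
  assumes prob: "prob_space M"
    and V_meas: "V \<in> M \<rightarrow>\<^sub>M count_space UNIV" and V_fin: "finite (V ` space M)"
    and W_meas: "W \<in> M \<rightarrow>\<^sub>M count_space UNIV" and W_fin: "finite (W ` space M)"
    and E_meas: "E \<in> M \<rightarrow>\<^sub>M count_space UNIV"
    and A_meas: "A \<in> M \<rightarrow>\<^sub>M count_space UNIV"
    and Y1_meas: "Y1 \<in> borel_measurable M" and Y0_meas: "Y0 \<in> borel_measurable M"
    and Y1_bd: "AE \<omega> in M. a \<le> Y1 \<omega> \<and> Y1 \<omega> \<le> b"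
    and Y0_bd: "AE \<omega> in M. a \<le> Y0 \<omega> \<and> Y0 \<omega> \<le> b"
    and Y_def: "\<And>\<omega>. Y \<omega> = (if A \<omega> then Y1 \<omega> else Y0 \<omega>)"
    and ignorability: "\<And>v a' S. S \<in> sets (borel \<Otimes>\<^sub>M borel) \<Longrightarrow>
        measure M (ev M (\<lambda>\<omega>. A \<omega> = a' \<and> (Y0 \<omega>, Y1 \<omega>) \<in> S \<and> V \<omega> = v \<and> E \<omega>))
          * measure M (ev M (\<lambda>\<omega>. V \<omega> = v \<and> E \<omega>))
        = measure M (ev M (\<lambda>\<omega>. A \<omega> = a' \<and> V \<omega> = v \<and> E \<omega>))
          * measure M (ev M (\<lambda>\<omega>. (Y0 \<omega>, Y1 \<omega>) \<in> S \<and> V \<omega> = v \<and> E \<omega>))"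
    and positivity: "\<And>v w a'. measure M (ev M (\<lambda>\<omega>. V \<omega> = v \<and> W \<omega> = w \<and> E \<omega>)) > 0 \<Longrightarrow>
        cprob M (\<lambda>\<omega>. A \<omega> = a') (\<lambda>\<omega>. V \<omega> = v \<and> W \<omega> = w \<and> E \<omega>) > 0"
    and transport_W: "\<And>v w. measure M (ev M (\<lambda>\<omega>. V \<omega> = v \<and> \<not> E \<omega>)) > 0 \<Longrightarrow>
        cprob M (\<lambda>\<omega>. W \<omega> = w) (\<lambda>\<omega>. V \<omega> = v \<and> E \<omega>)
        = cprob M (\<lambda>\<omega>. W \<omega> = w) (\<lambda>\<omega>. V \<omega> = v \<and> \<not> E \<omega>)"
    and transport_effect: "\<And>v w. measure M (ev M (\<lambda>\<omega>. V \<omega> = v \<and> W \<omega> = w \<and> E \<omega>)) > 0 \<Longrightarrow>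
        measure M (ev M (\<lambda>\<omega>. V \<omega> = v \<and> W \<omega> = w \<and> \<not> E \<omega>)) > 0 \<Longrightarrow>
        cexp M (\<lambda>\<omega>. Y1 \<omega> - Y0 \<omega>) (\<lambda>\<omega>. V \<omega> = v \<and> W \<omega> = w \<and> E \<omega>)
        = cexp M (\<lambda>\<omega>. Y1 \<omega> - Y0 \<omega>) (\<lambda>\<omega>. V \<omega> = v \<and> W \<omega> = w \<and> \<not> E \<omega>)"
    and delta_nonneg: "\<delta> \<ge> 0"
    and delta_bd: "\<And>v w. measure M (ev M (\<lambda>\<omega>. V \<omega> = v \<and> W \<omega> = w \<and> E \<omega>)) > 0 \<Longrightarrow>
        \<bar>cexp M (\<lambda>\<omega>. Y1 \<omega> - Y0 \<omega>) (\<lambda>\<omega>. V \<omega> = v \<and> W \<omega> = w \<and> E \<omega>)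
         - cexp M (\<lambda>\<omega>. Y1 \<omega> - Y0 \<omega>) (\<lambda>\<omega>. V \<omega> = v \<and> E \<omega>)\<bar> \<le> \<delta>"
    and nu_pos: "nu M V W E v w > 0"
  shows "let \<theta> = mu M V A E Y True v - mu M V A E Y False v;
             \<nu> = nu M V W E v w;
             \<tau> = cexp M (\<lambda>\<omega>. Y1 \<omega> - Y0 \<omega>) (\<lambda>\<omega>. V \<omega> = v \<and> W \<omega> = w \<and> E \<omega>)
         in max ((\<theta> - (\<theta> + \<delta>) * (1 - \<nu>)) / \<nu>) (\<theta> - \<delta>) \<le> \<tau>
          \<and> \<tau> \<le> min ((\<theta> - (\<theta> - \<delta>) * (1 - \<nu>)) / \<nu>) (\<theta> + \<delta>)"
proof -
  interpret prob_space M by (rule prob)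
  note [measurable] = V_meas E_meas A_meas
  let ?C = "\<lambda>\<omega>. V \<omega> = v \<and> E \<omega>" and ?S = "\<lambda>w' \<omega>. V \<omega> = v \<and> W \<omega> = w' \<and> E \<omega>"
  have integrable: "integrable M Y1" "integrable M Y0"
    using integrable_AE_bounded[OF finite_measure_axioms] Y1_meas Y1_bd Y0_meas Y0_bd by blast+
  have nu: "nu M V W E v w = measure M (ev M (?S w)) / measure M (ev M ?C)"
    using nu_eq_study_ratio[OF transport_W nu_pos] .
  then have pos_w: "measure M (ev M (?S w)) > 0"
    using nu_pos measure_nonneg[of M] by (auto simp: zero_less_divide_iff less_le)
  have "mu M V A E Y a' v = cexp M (if a' then Y1 else Y0) ?C" for a'
  proof (rule mu_eq_cexp_potential_outcome[OF finite_measure_axioms V_meas E_meas A_meas Y1_meas Y0_meas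
        Y_def ignorability[where v = v and a' = a']])
    have "0 < measure M (ev M (\<lambda>\<omega>. A \<omega> = a' \<and> ?S w \<omega>))"
      using positivity[OF pos_w, of a'] unfolding cprob_def by (simp add: zero_less_divide_iff)
    also have "\<dots> \<le> measure M (ev M (\<lambda>\<omega>. V \<omega> = v \<and> A \<omega> = a' \<and> E \<omega>))"
      by (intro finite_measure_mono sets_ev) (auto simp: ev_def)
    finally show "measure M (ev M (\<lambda>\<omega>. V \<omega> = v \<and> A \<omega> = a' \<and> E \<omega>)) > 0" .
  qed
  then have \<theta>: "mu M V A E Y True v - mu M V A E Y False v = cexp M (\<lambda>\<omega>. Y1 \<omega> - Y0 \<omega>) ?C"
    using integrable by (simp add: cexp_diff)
  show ?thesis
    unfolding \<theta> nu
    by (rule cexp_stratum_bounds[where P = ?C and S = ?S,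
          OF finite_measure_axioms _ _ W_meas W_fin _ pos_w delta_bd])
      (use integrable in auto)
qed

end
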